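(* Let $G_1$ and $G_2$ be graphs (each with at least two vertices) such that $\lambda(G_1)=-\iota(G_1)$ and $\lambda(G_2)=-\iota(G_2)$. Then $\lambda(G_1\Box G_2)=-\iota(G_1\Box G_2)$.
   Context: All graphs are finite and simple; $\lambda(G)$ denotes the smallest eigenvalue of the adjacency matrix of $G$. The average degree of a graph $T$ is $\overline{d}(T)=2|E(T)|/|V(T)|$, and $\iota(G)=\max\{\overline{d}(H): H \text{ an induced bipartite subgraph of } G\}$. The Cartesian product $G_1\Box G_2$ has vertex set $V(G_1)\times V(G_2)$, with $(v_1,w_1)$ adjacent to $(v_2,w_2)$ iff either $v_1=v_2$ and $\{w_1,w_2\}\in E(G_2)$, or $w_1=w_2$ and $\{v_1,v_2\}\in E(G_1)$. *)

theory Defs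
  imports "HOL-Analysis.Analysis"
begin

definition simple_graph :: "('v::finite \<Rightarrow> 'v \<Rightarrow> bool) \<Rightarrow> bool" where
  "simple_graph G \<longleftrightarrow> (\<forall>u v. G u v \<longrightarrow> G v u) \<and> (\<forall>v. \<not> G v v)"

definition adj_matrix :: "('v::finite \<Rightarrow> 'v \<Rightarrow> bool) \<Rightarrow> real ^ 'v ^ 'v" where
  "adj_matrix G = (\<chi> u v. if G u v then 1 else 0)"

definition mat_eigenvalue :: "real ^ 'n ^ 'n \<Rightarrow> real \<Rightarrow> bool" where
  "mat_eigenvalue A k \<longleftrightarrow> (\<exists>x. x \<noteq> 0 \<and> A *v x = k *\<^sub>R x)"

text \<open>Smallest eigenvalue of the adjacency matrix (all eigenvalues are real since the
  matrix is real symmetric).\<close>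
definition min_eig :: "('v::finite \<Rightarrow> 'v \<Rightarrow> bool) \<Rightarrow> real" where
  "min_eig G = Min {k. mat_eigenvalue (adj_matrix G) k}"

definition induced_edges :: "('v \<Rightarrow> 'v \<Rightarrow> bool) \<Rightarrow> 'v set \<Rightarrow> 'v set set" where
  "induced_edges G S = {{u, v} | u v. u \<in> S \<and> v \<in> S \<and> G u v}"

definition avg_degree :: "('v \<Rightarrow> 'v \<Rightarrow> bool) \<Rightarrow> 'v set \<Rightarrow> real" where
  "avg_degree G S = 2 * real (card (induced_edges G S)) / real (card S)"

definition induced_bipartite :: "('v \<Rightarrow> 'v \<Rightarrow> bool) \<Rightarrow> 'v set \<Rightarrow> bool" where
  "induced_bipartite G S \<longleftrightarrow> (\<exists>A B. A \<inter> B = {} \<and> A \<union> B = S \<and>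
      (\<forall>u\<in>A. \<forall>v\<in>A. \<not> G u v) \<and> (\<forall>u\<in>B. \<forall>v\<in>B. \<not> G u v))"

definition iota :: "('v::finite \<Rightarrow> 'v \<Rightarrow> bool) \<Rightarrow> real" where
  "iota G = Max {avg_degree G S | S. S \<noteq> {} \<and> induced_bipartite G S}"

definition cart_prod :: "('a \<Rightarrow> 'a \<Rightarrow> bool) \<Rightarrow> ('b \<Rightarrow> 'b \<Rightarrow> bool) \<Rightarrow> ('a \<times> 'b \<Rightarrow> 'a \<times> 'b \<Rightarrow> bool)" where
  "cart_prod G1 G2 = (\<lambda>(v1, w1) (v2, w2). (v1 = v2 \<and> G2 w1 w2) \<or> (w1 = w2 \<and> G1 v1 v2))"

end

theory Submission
  imports Defs
begin

text \<open>Testing the Rayleigh quotient of the adjacency matrix on the vector that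
  is \<open>1\<close> on one side and \<open>-1\<close> on the other side of an induced bipartite subgraph \<open>T\<close> gives
  \<open>\<lambda>(G) \<le> -d(T)\<close>, hence \<open>\<lambda>(G) \<le> -\<iota>(G)\<close>. For the Cartesian product the quadratic form of the
  adjacency matrix splits into a sum of quadratic forms of the factors along rows and columns,
  so \<open>\<lambda>(G\<^sub>1 \<box> G\<^sub>2) \<ge> \<lambda>(G\<^sub>1) + \<lambda>(G\<^sub>2)\<close>; and the product of two induced bipartite subgraphs is an
  induced bipartite subgraph whose average degree is the sum of theirs, so
  \<open>\<iota>(G\<^sub>1 \<box> G\<^sub>2) \<ge> \<iota>(G\<^sub>1) + \<iota>(G\<^sub>2)\<close>. Under the hypothesis these inequalities close up.\<close>

lemma inner_matrix_symmetric:
  fixes A :: "real^'n^'n"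
  assumes "transpose A = A"
  shows "x \<bullet> (A *v y) = y \<bullet> (A *v x)"
proof -
  have "x \<bullet> (A *v y) = (x v* A) \<bullet> y" by (simp add: dot_lmul_matrix)
  also have "x v* A = A *v x" by (metis assms vector_transpose_matrix)
  finally show ?thesis by (simp add: inner_commute)
qed

lemma rayleigh_minimum_exists:
  fixes A :: "real^'n^'n"
  obtains m x where "x \<noteq> 0" "x \<bullet> (A *v x) = m * (x \<bullet> x)"
    and "\<And>y. m * (y \<bullet> y) \<le> y \<bullet> (A *v y)"
proof -
  define q where "q y = y \<bullet> (A *v y)" for y
  have "continuous_on (sphere 0 1) q" unfolding q_def
    by (intro continuous_intros linear_continuous_on matrix_vector_mul_bounded_linear)
  then obtain x where x: "x \<in> sphere 0 1" and min: "\<forall>y \<in> sphere 0 1. q x \<le> q y"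
    using continuous_attains_inf[OF compact_sphere, of 0 1] by fastforce
  have xx: "x \<bullet> x = 1" using x by (simp add: dot_square_norm)
  have "q x * (y \<bullet> y) \<le> q y" for y
  proof (cases "y = 0")
    case False
    have "q x \<le> q ((1 / norm y) *\<^sub>R y)" using False min by simp
    also have "\<dots> = q y / (norm y)\<^sup>2"
      by (simp add: q_def matrix_vector_mult_scaleR power2_eq_square)
    finally show ?thesis using False by (simp add: field_simps power2_norm_eq_inner)
  qed (simp add: q_def)
  moreover have "x \<noteq> 0" using x by auto
  ultimately show ?thesis using that[of x "q x"] xx unfolding q_def by simp
qed

lemma rayleigh_minimizer_is_eigenvector:
  fixes A :: "real^'n^'n"
  assumes sym: "transpose A = A"
    and lb: "\<And>y. m * (y \<bullet> y) \<le> y \<bullet> (A *v y)"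
    and min: "x \<bullet> (A *v x) = m * (x \<bullet> x)"
  shows "A *v x = m *\<^sub>R x"
proof (rule ccontr)
  define q where "q y = y \<bullet> (A *v y) - m * (y \<bullet> y)" for y
  define z where "z = A *v x - m *\<^sub>R x"
  assume "A *v x \<noteq> m *\<^sub>R x"
  then have zz: "z \<bullet> z > 0" by (simp add: z_def)
  have qz: "q z \<ge> 0" using lb[of z] by (simp add: q_def)
  \<comment> \<open>moving from \<open>x\<close> against the residual \<open>z\<close> decreases \<open>q\<close> to first order\<close>
  have expand: "q (x - t *\<^sub>R z) = q x - 2 * t * (z \<bullet> z) + t\<^sup>2 * q z" for t
  proof -
    have "x \<bullet> (A *v z) = z \<bullet> (A *v x)" by (rule inner_matrix_symmetric[OF sym])
    moreover have "z \<bullet> (A *v x) = z \<bullet> z + m * (x \<bullet> z)"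
      by (simp add: z_def inner_diff_left inner_commute)
    ultimately show ?thesis
      by (simp add: q_def matrix_vector_mult_diff_distrib matrix_vector_mult_scaleR
          inner_diff_left inner_diff_right inner_commute power2_eq_square algebra_simps)
  qed
  define t where "t = (z \<bullet> z) / (q z + 1)"
  have t: "t > 0" "t * q z < z \<bullet> z" using zz qz by (simp_all add: t_def field_simps)
  have "0 \<le> q (x - t *\<^sub>R z)" using lb[of "x - t *\<^sub>R z"] by (simp add: q_def)
  also have "\<dots> = t * (t * q z - 2 * (z \<bullet> z))"
    using min by (simp add: expand power2_eq_square algebra_simps) (simp add: q_def)
  also have "\<dots> < 0" using t zz mult_pos_neg[of t "t * q z - 2 * (z \<bullet> z)"] by linarith
  finally show False by simp
qed

lemma finite_eigenvalues_symmetric: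
  fixes A :: "real^'n^'n"
  assumes sym: "transpose A = A"
  shows "finite {k. mat_eigenvalue A k}"
proof -
  define E where "E = {k. mat_eigenvalue A k}"
  define v where "v k = (SOME x. x \<noteq> 0 \<and> A *v x = k *\<^sub>R x)" for k
  have v: "v k \<noteq> 0 \<and> A *v v k = k *\<^sub>R v k" if "k \<in> E" for k
    using that unfolding E_def mat_eigenvalue_def v_def
    by (metis (mono_tags, lifting) someI_ex mem_Collect_eq)
  have inj: "inj_on v E"
  proof (rule inj_onI)
    fix k l assume kl: "k \<in> E" "l \<in> E" "v k = v l"
    then have "k *\<^sub>R v k = l *\<^sub>R v k" using v by metis
    then show "k = l" using v[OF kl(1)] by simp
  qed
  have "pairwise orthogonal (v ` E)"
    unfolding pairwise_def orthogonal_def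
  proof clarify
    fix k l assume kl: "k \<in> E" "l \<in> E" "v k \<noteq> v l"
    have "k * (v k \<bullet> v l) = v l \<bullet> (A *v v k)" using v[OF kl(1)] by (simp add: inner_commute)
    also have "\<dots> = l * (v k \<bullet> v l)"
      using v[OF kl(2)] inner_matrix_symmetric[OF sym] by simp
    finally show "v k \<bullet> v l = 0" using kl by auto
  qed
  moreover have "0 \<notin> v ` E" using v by auto
  ultimately have "finite (v ` E)"
    using pairwise_orthogonal_independent independent_imp_finite by blast
  then show ?thesis using finite_imageD inj E_def by blast
qed

lemma symmetric_Min_eigenvalue:
  fixes A :: "real^'n^'n"
  assumes sym: "transpose A = A"
  defines "lmin \<equiv> Min {k. mat_eigenvalue A k}"
  shows "lmin * (y \<bullet> y) \<le> y \<bullet> (A *v y)"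
    and "\<exists>x. x \<noteq> 0 \<and> A *v x = lmin *\<^sub>R x"
proof -
  obtain m x where x: "x \<noteq> 0" "x \<bullet> (A *v x) = m * (x \<bullet> x)"
    and lb: "\<And>y. m * (y \<bullet> y) \<le> y \<bullet> (A *v y)"
    using rayleigh_minimum_exists[of A] by blast
  have eig: "A *v x = m *\<^sub>R x" using rayleigh_minimizer_is_eigenvector[OF sym lb x(2)] .
  have "lmin = m" unfolding lmin_def
  proof (rule Min_eqI)
    show "finite {k. mat_eigenvalue A k}" by (rule finite_eigenvalues_symmetric[OF sym])
    show "m \<in> {k. mat_eigenvalue A k}" using x eig by (auto simp: mat_eigenvalue_def)
    fix k assume "k \<in> {k. mat_eigenvalue A k}"
    then obtain y where y: "y \<noteq> 0" "A *v y = k *\<^sub>R y" by (auto simp: mat_eigenvalue_def)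
    have "m * (y \<bullet> y) \<le> k * (y \<bullet> y)" using lb[of y] y by simp
    then show "m \<le> k" using y by simp
  qed
  then show "lmin * (y \<bullet> y) \<le> y \<bullet> (A *v y)" and "\<exists>x. x \<noteq> 0 \<and> A *v x = lmin *\<^sub>R x"
    using lb x eig by auto
qed

definition edge_form :: "('v \<Rightarrow> 'v \<Rightarrow> bool) \<Rightarrow> 'v set \<Rightarrow> ('v \<Rightarrow> real) \<Rightarrow> real" where
  "edge_form G S f = (\<Sum>u\<in>S. \<Sum>v\<in>S. if G u v then f u * f v else 0)"

lemma adj_matrix_symmetric: "simple_graph G \<Longrightarrow> transpose (adj_matrix G) = adj_matrix G"
  unfolding simple_graph_def transpose_def adj_matrix_def by (auto simp: vec_eq_iff)

lemma inner_adj_matrix: "x \<bullet> (adj_matrix G *v x) = edge_form G UNIV (($) x)"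
  unfolding edge_form_def inner_vec_def matrix_vector_mult_def adj_matrix_def
  by (auto simp: sum_distrib_left intro!: sum.cong)

lemma inner_self_vec_lambda: "(\<chi> u. f u) \<bullet> (\<chi> u. f u) = (\<Sum>u\<in>UNIV. (f u)\<^sup>2)"
  by (simp add: inner_vec_def power2_eq_square)

lemma min_eig_le_edge_form:
  fixes G :: "'v::finite \<Rightarrow> 'v \<Rightarrow> bool"
  assumes "simple_graph G"
  shows "min_eig G * (\<Sum>u\<in>UNIV. (f u)\<^sup>2) \<le> edge_form G UNIV f"
proof -
  have "($) (\<chi> u. f u) = f" by auto
  then show ?thesis
    using symmetric_Min_eigenvalue(1)[OF adj_matrix_symmetric[OF assms], of "\<chi> u. f u"]
    by (simp add: min_eig_def inner_adj_matrix inner_self_vec_lambda)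
qed

lemma min_eig_edge_form_attained:
  fixes G :: "'v::finite \<Rightarrow> 'v \<Rightarrow> bool"
  assumes "simple_graph G"
  obtains f where "(\<Sum>u\<in>UNIV. (f u)\<^sup>2) > 0"
    and "edge_form G UNIV f = min_eig G * (\<Sum>u\<in>UNIV. (f u)\<^sup>2)"
proof -
  obtain x where x: "x \<noteq> 0" "adj_matrix G *v x = min_eig G *\<^sub>R x"
    using symmetric_Min_eigenvalue(2)[OF adj_matrix_symmetric[OF assms]] min_eig_def by metis
  have xx: "x \<bullet> x = (\<Sum>u\<in>UNIV. (x $ u)\<^sup>2)"
    using inner_self_vec_lambda[of "($) x"] by simp
  show ?thesis
  proof (rule that[of "($) x"])
    show "(\<Sum>u\<in>UNIV. (x $ u)\<^sup>2) > 0" by (metis xx inner_gt_zero_iff x(1))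
    show "edge_form G UNIV (($) x) = min_eig G * (\<Sum>u\<in>UNIV. (x $ u)\<^sup>2)"
      using x(2) xx by (simp flip: inner_adj_matrix)
  qed
qed

lemma edge_form_restrict:
  fixes G :: "'v::finite \<Rightarrow> 'v \<Rightarrow> bool"
  shows "edge_form G UNIV (\<lambda>u. if u \<in> S then f u else 0) = edge_form G S f"
proof -
  let ?g = "\<lambda>u. if u \<in> S then f u else 0"
  have "edge_form G UNIV ?g = (\<Sum>u\<in>S. \<Sum>v\<in>UNIV. if G u v then ?g u * ?g v else 0)"
    unfolding edge_form_def by (rule sum.mono_neutral_right) (auto intro: sum.neutral)
  also have "\<dots> = (\<Sum>u\<in>S. \<Sum>v\<in>S. if G u v then ?g u * ?g v else 0)"
    by (intro sum.cong refl sum.mono_neutral_right) auto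
  also have "\<dots> = edge_form G S f" unfolding edge_form_def by (intro sum.cong refl) auto
  finally show ?thesis .
qed

lemma edge_form_ones:
  assumes G: "simple_graph G" and S: "finite S"
  shows "edge_form G S (\<lambda>_. 1) = 2 * real (card (induced_edges G S))"
proof -
  define D where "D = {p \<in> S \<times> S. G (fst p) (snd p)}"
  have "edge_form G S (\<lambda>_. 1) = (\<Sum>p\<in>S \<times> S. if G (fst p) (snd p) then 1 else 0)"
    unfolding edge_form_def sum.cartesian_product
    by (intro sum.cong refl) (auto simp: case_prod_beta)
  also have "\<dots> = (\<Sum>p\<in>D. 1)"
    unfolding D_def by (subst sum.inter_filter[symmetric]) (use S in auto)
  also have "\<dots> = (\<Sum>e\<in>induced_edges G S. \<Sum>p\<in>{p \<in> D. {fst p, snd p} = e}. 1)"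
  proof (rule sum.group[symmetric])
    show "finite D" using S by (simp add: D_def)
    have "induced_edges G S \<subseteq> (\<lambda>(u, v). {u, v}) ` (S \<times> S)"
      unfolding induced_edges_def by auto
    then show "finite (induced_edges G S)" using S finite_subset by blast
    show "(\<lambda>p. {fst p, snd p}) ` D \<subseteq> induced_edges G S"
      unfolding D_def induced_edges_def by force
  qed
  also have "\<dots> = (\<Sum>e\<in>induced_edges G S. 2)"
  proof (rule sum.cong[OF refl])
    fix e assume "e \<in> induced_edges G S"
    then obtain u v where e: "e = {u, v}" "u \<in> S" "v \<in> S" "G u v"
      unfolding induced_edges_def by auto
    then have "u \<noteq> v" "G v u" using G unfolding simple_graph_def by auto
    moreover have "{p \<in> D. {fst p, snd p} = e} = {(u, v), (v, u)}"
      using e \<open>G v u\<close> unfolding D_def by (auto simp: doubleton_eq_iff)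
    ultimately show "(\<Sum>p\<in>{p \<in> D. {fst p, snd p} = e}. 1) = (2::real)" by simp
  qed
  finally show ?thesis by simp
qed

lemma avg_degree_edge_form:
  assumes "simple_graph G" "finite S"
  shows "avg_degree G S = edge_form G S (\<lambda>_. 1) / real (card S)"
  using edge_form_ones[OF assms] unfolding avg_degree_def by simp

lemma min_eig_le_neg_avg_degree:
  fixes G :: "'v::finite \<Rightarrow> 'v \<Rightarrow> bool"
  assumes G: "simple_graph G" and "S \<noteq> {}" and "induced_bipartite G S"
  shows "min_eig G \<le> - avg_degree G S"
proof -
  obtain A B where AB: "A \<inter> B = {}" "A \<union> B = S"
    "\<forall>u\<in>A. \<forall>v\<in>A. \<not> G u v" "\<forall>u\<in>B. \<forall>v\<in>B. \<not> G u v"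
    using assms(3) unfolding induced_bipartite_def by blast
  define f :: "'v \<Rightarrow> real" where "f u = (if u \<in> A then 1 else if u \<in> B then -1 else 0)" for u
  have "(\<Sum>u\<in>UNIV. (f u)\<^sup>2) = (\<Sum>u\<in>UNIV. if u \<in> S then 1 else 0)"
    using AB by (intro sum.cong) (auto simp: f_def)
  also have "\<dots> = real (card S)" by (simp add: sum.If_cases)
  finally have norm_f: "(\<Sum>u\<in>UNIV. (f u)\<^sup>2) = real (card S)" .
  \<comment> \<open>every edge inside \<open>S\<close> joins \<open>A\<close> to \<open>B\<close>, where \<open>f\<close> takes opposite signs\<close>
  have "edge_form G UNIV f = - edge_form G UNIV (\<lambda>u. if u \<in> S then 1 else 0)"
    unfolding edge_form_def sum_negf[symmetric]
    by (intro sum.cong refl) (use AB in \<open>auto simp: f_def\<close>)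
  also have "\<dots> = - edge_form G S (\<lambda>_. 1)" by (simp add: edge_form_restrict)
  finally have "min_eig G * real (card S) \<le> - edge_form G S (\<lambda>_. 1)"
    using min_eig_le_edge_form[OF G, of f] norm_f by simp
  moreover have "card S > 0" using \<open>S \<noteq> {}\<close> by (simp add: card_gt_0_iff)
  ultimately show ?thesis by (simp add: avg_degree_edge_form[OF G] field_simps)
qed

lemma finite_nonempty_bipartite_avg_degrees:
  fixes G :: "'v::finite \<Rightarrow> 'v \<Rightarrow> bool"
  assumes "simple_graph G"
  shows "finite {avg_degree G S | S. S \<noteq> {} \<and> induced_bipartite G S}"
    and "{avg_degree G S | S. S \<noteq> {} \<and> induced_bipartite G S} \<noteq> {}"
proof -
  show "finite {avg_degree G S | S. S \<noteq> {} \<and> induced_bipartite G S}"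
    by (rule finite_subset[of _ "avg_degree G ` UNIV"]) auto
  have "induced_bipartite G {undefined}" unfolding induced_bipartite_def
    using assms by (intro exI[of _ "{undefined}"] exI[of _ "{}"]) (auto simp: simple_graph_def)
  then show "{avg_degree G S | S. S \<noteq> {} \<and> induced_bipartite G S} \<noteq> {}" by blast
qed

lemma avg_degree_le_iota:
  fixes G :: "'v::finite \<Rightarrow> 'v \<Rightarrow> bool"
  assumes "simple_graph G" "S \<noteq> {}" "induced_bipartite G S"
  shows "avg_degree G S \<le> iota G"
  unfolding iota_def using assms finite_nonempty_bipartite_avg_degrees(1)[OF assms(1)]
  by (intro Max_ge) auto

lemma iota_attained:
  fixes G :: "'v::finite \<Rightarrow> 'v \<Rightarrow> bool"
  assumes "simple_graph G"
  obtains S where "S \<noteq> {}" "induced_bipartite G S" "iota G = avg_degree G S"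
  using Max_in[OF finite_nonempty_bipartite_avg_degrees[OF assms]] that
  unfolding iota_def by auto

lemma min_eig_le_neg_iota:
  fixes G :: "'v::finite \<Rightarrow> 'v \<Rightarrow> bool"
  assumes "simple_graph G"
  shows "min_eig G \<le> - iota G"
  by (metis iota_attained min_eig_le_neg_avg_degree assms)

lemma irreflp_simple_graph: "simple_graph G \<Longrightarrow> irreflp G"
  unfolding simple_graph_def irreflp_def by blast

lemma simple_graph_cart_prod:
  "simple_graph G1 \<Longrightarrow> simple_graph G2 \<Longrightarrow> simple_graph (cart_prod G1 G2)"
  unfolding simple_graph_def cart_prod_def by auto

lemma sum_if_const: "(\<Sum>x\<in>A. if c then g x else 0) = (if c then sum g A else 0)"
  by simp

lemma edge_form_cart_prod:
  assumes "irreflp G1" "irreflp G2" and "finite S1" "finite S2"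
  shows "edge_form (cart_prod G1 G2) (S1 \<times> S2) f
     = (\<Sum>a\<in>S1. edge_form G2 S2 (\<lambda>b. f (a, b))) + (\<Sum>b\<in>S2. edge_form G1 S1 (\<lambda>a. f (a, b)))"
proof -
  have "edge_form (cart_prod G1 G2) (S1 \<times> S2) f = (\<Sum>a\<in>S1. \<Sum>b\<in>S2. \<Sum>a'\<in>S1. \<Sum>b'\<in>S2.
      if cart_prod G1 G2 (a, b) (a', b') then f (a, b) * f (a', b') else 0)"
    unfolding edge_form_def sum.cartesian_product' by simp
  also have "\<dots> = (\<Sum>a\<in>S1. \<Sum>b\<in>S2. \<Sum>a'\<in>S1. \<Sum>b'\<in>S2.
      (if a = a' then (if G2 b b' then f (a, b) * f (a', b') else 0) else 0)
      + (if b = b' then (if G1 a a' then f (a, b) * f (a', b') else 0) else 0))"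
    using irreflpD[OF assms(1)] irreflpD[OF assms(2)]
    by (intro sum.cong refl) (auto simp: cart_prod_def)
  also have "\<dots> = (\<Sum>a\<in>S1. \<Sum>b\<in>S2. \<Sum>b'\<in>S2. if G2 b b' then f (a, b) * f (a, b') else 0)
     + (\<Sum>a\<in>S1. \<Sum>b\<in>S2. \<Sum>a'\<in>S1. if G1 a a' then f (a, b) * f (a', b) else 0)"
    using assms(3,4) by (simp add: sum.distrib sum_if_const sum.delta' cong: sum.cong)
  also have "(\<Sum>a\<in>S1. \<Sum>b\<in>S2. \<Sum>a'\<in>S1. if G1 a a' then f (a, b) * f (a', b) else 0)
     = (\<Sum>b\<in>S2. \<Sum>a\<in>S1. \<Sum>a'\<in>S1. if G1 a a' then f (a, b) * f (a', b) else 0)"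
    by (rule sum.swap)
  finally show ?thesis unfolding edge_form_def .
qed

lemma min_eig_cart_prod_ge:
  fixes G1 :: "'a::finite \<Rightarrow> 'a \<Rightarrow> bool" and G2 :: "'b::finite \<Rightarrow> 'b \<Rightarrow> bool"
  assumes G1: "simple_graph G1" and G2: "simple_graph G2"
  shows "min_eig G1 + min_eig G2 \<le> min_eig (cart_prod G1 G2)"
proof -
  let ?P = "cart_prod G1 G2"
  obtain f where pos: "(\<Sum>p\<in>UNIV. (f p)\<^sup>2) > 0"
    and f: "edge_form ?P UNIV f = min_eig ?P * (\<Sum>p\<in>UNIV. (f p)\<^sup>2)"
    using min_eig_edge_form_attained[OF simple_graph_cart_prod[OF G1 G2]] by blast
  note irrefl = irreflp_simple_graph[OF G1] irreflp_simple_graph[OF G2]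
  have norm_swap: "(\<Sum>b\<in>UNIV. \<Sum>a\<in>UNIV. (f (a, b))\<^sup>2) = (\<Sum>p\<in>UNIV. (f p)\<^sup>2)"
    by (subst sum.swap) (simp add: sum.cartesian_product flip: UNIV_Times_UNIV)
  have "(min_eig G1 + min_eig G2) * (\<Sum>p\<in>UNIV. (f p)\<^sup>2)
      = (\<Sum>a\<in>UNIV. min_eig G2 * (\<Sum>b\<in>UNIV. (f (a, b))\<^sup>2))
        + (\<Sum>b\<in>UNIV. min_eig G1 * (\<Sum>a\<in>UNIV. (f (a, b))\<^sup>2))"
    by (simp add: norm_swap algebra_simps flip: sum_distrib_left)
      (simp add: sum.cartesian_product flip: UNIV_Times_UNIV)
  also have "\<dots> \<le> (\<Sum>a\<in>UNIV. edge_form G2 UNIV (\<lambda>b. f (a, b)))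
        + (\<Sum>b\<in>UNIV. edge_form G1 UNIV (\<lambda>a. f (a, b)))"
    by (intro add_mono sum_mono min_eig_le_edge_form G1 G2)
  also have "\<dots> = edge_form ?P UNIV f"
    using edge_form_cart_prod[OF irrefl finite_class.finite_UNIV finite_class.finite_UNIV]
    by (simp add: UNIV_Times_UNIV)
  finally show ?thesis using f pos by simp
qed

lemma induced_bipartite_Times:
  assumes "induced_bipartite G1 S1" "induced_bipartite G2 S2"
  shows "induced_bipartite (cart_prod G1 G2) (S1 \<times> S2)"
proof -
  obtain A1 B1 where 1: "A1 \<inter> B1 = {}" "A1 \<union> B1 = S1"
    "\<forall>u\<in>A1. \<forall>v\<in>A1. \<not> G1 u v" "\<forall>u\<in>B1. \<forall>v\<in>B1. \<not> G1 u v"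
    using assms(1) unfolding induced_bipartite_def by blast
  obtain A2 B2 where 2: "A2 \<inter> B2 = {}" "A2 \<union> B2 = S2"
    "\<forall>u\<in>A2. \<forall>v\<in>A2. \<not> G2 u v" "\<forall>u\<in>B2. \<forall>v\<in>B2. \<not> G2 u v"
    using assms(2) unfolding induced_bipartite_def by blast
  show ?thesis unfolding induced_bipartite_def
    by (rule exI[of _ "A1 \<times> A2 \<union> B1 \<times> B2"], rule exI[of _ "A1 \<times> B2 \<union> B1 \<times> A2"])
      (use 1 2 in \<open>auto simp: cart_prod_def\<close>)
qed

lemma avg_degree_cart_prod_Times:
  assumes G1: "simple_graph G1" and G2: "simple_graph G2"
    and S1: "finite S1" "S1 \<noteq> {}" and S2: "finite S2" "S2 \<noteq> {}"
  shows "avg_degree (cart_prod G1 G2) (S1 \<times> S2) = avg_degree G1 S1 + avg_degree G2 S2"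
proof -
  note irrefl = irreflp_simple_graph[OF G1] irreflp_simple_graph[OF G2]
  have "card S1 > 0" "card S2 > 0" using S1 S2 by (auto simp: card_gt_0_iff)
  then show ?thesis
    using edge_form_cart_prod[OF irrefl S1(1) S2(1), where f = "\<lambda>_. 1"]
    by (simp add: avg_degree_edge_form G1 G2 S1 S2 simple_graph_cart_prod card_cartesian_product
        field_simps)
qed

lemma iota_cart_prod_ge:
  fixes G1 :: "'a::finite \<Rightarrow> 'a \<Rightarrow> bool" and G2 :: "'b::finite \<Rightarrow> 'b \<Rightarrow> bool"
  assumes G1: "simple_graph G1" and G2: "simple_graph G2"
  shows "iota G1 + iota G2 \<le> iota (cart_prod G1 G2)"
proof -
  obtain S1 where S1: "S1 \<noteq> {}" "induced_bipartite G1 S1" "iota G1 = avg_degree G1 S1"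
    using iota_attained[OF G1] .
  obtain S2 where S2: "S2 \<noteq> {}" "induced_bipartite G2 S2" "iota G2 = avg_degree G2 S2"
    using iota_attained[OF G2] .
  have "iota G1 + iota G2 = avg_degree (cart_prod G1 G2) (S1 \<times> S2)"
    using S1 S2 avg_degree_cart_prod_Times[OF G1 G2] by simp
  also have "\<dots> \<le> iota (cart_prod G1 G2)"
    using S1 S2
    by (intro avg_degree_le_iota simple_graph_cart_prod G1 G2 induced_bipartite_Times) auto
  finally show ?thesis .
qed

theorem proposition3p1:
  fixes G1 :: "'a::finite \<Rightarrow> 'a \<Rightarrow> bool" and G2 :: "'b::finite \<Rightarrow> 'b \<Rightarrow> bool"
  assumes "simple_graph G1" and "simple_graph G2"
    and "CARD('a) \<ge> 2" and "CARD('b) \<ge> 2"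
    and "min_eig G1 = - iota G1" and "min_eig G2 = - iota G2"
  shows "min_eig (cart_prod G1 G2) = - iota (cart_prod G1 G2)"
proof -
  have "- iota (cart_prod G1 G2) \<le> min_eig G1 + min_eig G2"
    using iota_cart_prod_ge[OF assms(1,2)] assms(5,6) by simp
  also have "\<dots> \<le> min_eig (cart_prod G1 G2)"
    by (rule min_eig_cart_prod_ge[OF assms(1,2)])
  finally show ?thesis
    using min_eig_le_neg_iota[OF simple_graph_cart_prod[OF assms(1,2)]] by simp
qed

end
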